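(* Let $\alpha$ be a periodic magnetic potential and $V$ a periodic electric potential on a periodic graph $\mathcal G$, and for $t\in\mathbb R$ let $H_{t\alpha}=-\Delta_{t\alpha}+V$. Then the absolutely continuous spectrum of $H_{t\alpha}$ is non-empty for all except finitely many $t\in[0,1]$.
   Context: Let $\Gamma\subset\mathbb R^d$ be a lattice with basis $\mathfrak a_1,\dots,\mathfrak a_d$. Let $\mathcal G=(\mathcal V,\mathcal E)$ be a connected, locally finite, infinite graph embedded in $\mathbb R^d$ (loops and multiple edges allowed), invariant under translations by $\Gamma$, with finite quotient $\mathcal G_*=\mathcal G/\Gamma=(\mathcal V_*,\mathcal E_* )$; $\nu=\#\mathcal V_*$. Each unoriented edge gives two oriented edges; $\mathcal A,\mathcal A_*$ are the oriented edge sets; $\underline{\mathbf e}$ is the inverse; $\varkappa_x$ is the number of oriented edges starting at $x$. Each edge $\mathbf e\in\mathcal A_*$ has an index $\tau(\mathbf e)\in\mathbb Z^d$ (the difference of the lattice coordinates, w.r.t. the basis, of the translated copies of the fundamental cell containing the terminal and initial vertices of a lift of $\mathbf e$). A periodic magnetic potential is $\alpha:\mathcal A\to\mathbb R$ with $\alpha(\underline{\mathbf e})=-\alpha(\mathbf e)$ and $\Gamma$-invariance; $V$ is a real $\Gamma$-periodic function. $H_\alpha=-\Delta_\alpha+V$ on $\ell^2(\mathcal V)$ with $\Delta_\alpha=\varkappa-A_\alpha$, $(A_\alpha f)_x=\sum_{\mathbf e=(x,y)\in\mathcal A}e^{i\alpha(\mathbf e)}f_y$, $(\varkappa f)_x=\varkappa_xf_x$.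 Fiber operators for $k\in\mathbb T^d$: $H_\alpha(k)=A_\alpha(k)-\varkappa+V$ on $\mathbb C^\nu$, $(A_\alpha(k)f)_x=\sum_{\mathbf e=(x,y)\in\mathcal A_*}e^{i(\alpha(\mathbf e)+\langle\tau(\mathbf e),k\rangle)}f_y$, eigenvalues $\lambda_{\alpha,1}(k)\le\dots\le\lambda_{\alpha,\nu}(k)$; bands $\sigma_j(H_\alpha)=\lambda_{\alpha,j}(\mathbb T^d)$. The spectrum is $\sigma(H_\alpha)=\sigma_{ac}(H_\alpha)\cup\sigma_{fb}(H_\alpha)$, where the absolutely continuous spectrum $\sigma_{ac}$ is the union of the non-degenerate bands (bands of positive length) and $\sigma_{fb}$ is the set of flat bands (eigenvalues of infinite multiplicity). *)

theory Defs
  imports Complex_Main "Jordan_Normal_Form.Char_Poly"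
begin

text \<open>
  Encoding of a Gamma-periodic graph through its finite quotient.
  Lattice coordinates are taken w.r.t. the basis a_1..a_d, so Gamma = Z^d.
  Quotient vertices: {0..<nu}.  Oriented quotient edges: the finite set E
  (of an arbitrary type 'e), with initial vertex src, terminal vertex tgt,
  inverse edge rev_e, and index tau e :: nat => int (coordinates i < d).
  A vertex of the periodic graph G is a pair (x, n) with x < nu and
  n : nat => int supported in {..<d} (lattice coordinate of the cell);
  the lift of e starting at (x,n) ends at (tgt e, n + tau e).
\<close>

definition lattice_pt :: "nat \<Rightarrow> (nat \<Rightarrow> int) \<Rightarrow> bool" where
  "lattice_pt d n \<longleftrightarrow> (\<forall>i\<ge>d. n i = 0)"

definition periodic_graph ::
  "nat \<Rightarrow> nat \<Rightarrow> 'e set \<Rightarrow> ('e \<Rightarrow> nat) \<Rightarrow> ('e \<Rightarrow> nat) \<Rightarrow> ('e \<Rightarrow> 'e)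
     \<Rightarrow> ('e \<Rightarrow> nat \<Rightarrow> int) \<Rightarrow> bool" where
  "periodic_graph d \<nu> E src tgt rev_e \<tau> \<longleftrightarrow>
     finite E \<and> \<nu> \<ge> 1 \<and>
     (\<forall>e\<in>E. src e < \<nu> \<and> tgt e < \<nu> \<and> rev_e e \<in> E \<and> rev_e e \<noteq> e \<and> rev_e (rev_e e) = e
        \<and> src (rev_e e) = tgt e \<and> tgt (rev_e e) = src e
        \<and> lattice_pt d (\<tau> e) \<and> (\<forall>i. \<tau> (rev_e e) i = - \<tau> e i))"

definition lift_adj ::
  "nat \<Rightarrow> 'e set \<Rightarrow> ('e \<Rightarrow> nat) \<Rightarrow> ('e \<Rightarrow> nat) \<Rightarrow> ('e \<Rightarrow> nat \<Rightarrow> int)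
     \<Rightarrow> nat \<times> (nat \<Rightarrow> int) \<Rightarrow> nat \<times> (nat \<Rightarrow> int) \<Rightarrow> bool" where
  "lift_adj d E src tgt \<tau> u w \<longleftrightarrow>
     (\<exists>e\<in>E. src e = fst u \<and> tgt e = fst w \<and> (\<forall>i. snd w i = snd u i + \<tau> e i))"

text \<open>G is connected (it is infinite and locally finite automatically when d >= 1).\<close>
definition lift_connected ::
  "nat \<Rightarrow> nat \<Rightarrow> 'e set \<Rightarrow> ('e \<Rightarrow> nat) \<Rightarrow> ('e \<Rightarrow> nat) \<Rightarrow> ('e \<Rightarrow> nat \<Rightarrow> int) \<Rightarrow> bool" where
  "lift_connected d \<nu> E src tgt \<tau> \<longleftrightarrow>
     (\<forall>x y n m. x < \<nu> \<longrightarrow> y < \<nu> \<longrightarrow> lattice_pt d n \<longrightarrow> lattice_pt d m \<longrightarrow>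
        (lift_adj d E src tgt \<tau>)\<^sup>*\<^sup>* (x, n) (y, m))"

definition magnetic_potential :: "'e set \<Rightarrow> ('e \<Rightarrow> 'e) \<Rightarrow> ('e \<Rightarrow> real) \<Rightarrow> bool" where
  "magnetic_potential E rev_e \<alpha> \<longleftrightarrow> (\<forall>e\<in>E. \<alpha> (rev_e e) = - \<alpha> e)"

definition degree_at :: "'e set \<Rightarrow> ('e \<Rightarrow> nat) \<Rightarrow> nat \<Rightarrow> nat" where
  "degree_at E src x = card {e\<in>E. src e = x}"

text \<open>Fiber operator H_alpha(k) = A_alpha(k) - kappa + V on C^nu.\<close>
definition fiber_op ::
  "nat \<Rightarrow> nat \<Rightarrow> 'e set \<Rightarrow> ('e \<Rightarrow> nat) \<Rightarrow> ('e \<Rightarrow> nat) \<Rightarrow> ('e \<Rightarrow> nat \<Rightarrow> int)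
     \<Rightarrow> ('e \<Rightarrow> real) \<Rightarrow> (nat \<Rightarrow> real) \<Rightarrow> (nat \<Rightarrow> real) \<Rightarrow> complex mat" where
  "fiber_op d \<nu> E src tgt \<tau> \<alpha> V k = mat \<nu> \<nu> (\<lambda>(x, y).
      (\<Sum>e\<in>{e\<in>E. src e = x \<and> tgt e = y}.
          cis (\<alpha> e + (\<Sum>i<d. real_of_int (\<tau> e i) * k i)))
      + (if x = y then complex_of_real (V x - real (degree_at E src x)) else 0))"

text \<open>j-th eigenvalue (j = 1..nu) in increasing order, counted with multiplicity.\<close>
definition fiber_eigenvalue :: "complex mat \<Rightarrow> nat \<Rightarrow> real" where
  "fiber_eigenvalue M j = sorted_list_of_multiset (image_mset Re (proots (char_poly M))) ! (j - 1)"

definition band ::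
  "nat \<Rightarrow> nat \<Rightarrow> 'e set \<Rightarrow> ('e \<Rightarrow> nat) \<Rightarrow> ('e \<Rightarrow> nat) \<Rightarrow> ('e \<Rightarrow> nat \<Rightarrow> int)
     \<Rightarrow> ('e \<Rightarrow> real) \<Rightarrow> (nat \<Rightarrow> real) \<Rightarrow> nat \<Rightarrow> real set" where
  "band d \<nu> E src tgt \<tau> \<alpha> V j =
     (\<lambda>k. fiber_eigenvalue (fiber_op d \<nu> E src tgt \<tau> \<alpha> V k) j) ` UNIV"

definition ac_spectrum ::
  "nat \<Rightarrow> nat \<Rightarrow> 'e set \<Rightarrow> ('e \<Rightarrow> nat) \<Rightarrow> ('e \<Rightarrow> nat) \<Rightarrow> ('e \<Rightarrow> nat \<Rightarrow> int)
     \<Rightarrow> ('e \<Rightarrow> real) \<Rightarrow> (nat \<Rightarrow> real) \<Rightarrow> real set" where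
  "ac_spectrum d \<nu> E src tgt \<tau> \<alpha> V =
     \<Union> {band d \<nu> E src tgt \<tau> \<alpha> V j | j. 1 \<le> j \<and> j \<le> \<nu> \<and>
          Inf (band d \<nu> E src tgt \<tau> \<alpha> V j) < Sup (band d \<nu> E src tgt \<tau> \<alpha> V j)}"

end

(*
  If the absolutely continuous spectrum of H_{t alpha} is empty, every band is flat: the
  eigenvalues of the fibre operators H_{t alpha}(k) do not depend on k, and neither does the
  trace of H_{t alpha}(k)^m. Expanding this trace over closed walks of length m in the quotient
  graph and taking k = (s, 0, ..., 0) turns it into a trigonometric polynomial in s whose
  frequencies are the windings of the walks in the first lattice direction; being constant, it
  has vanishing coefficients at all non-zero frequencies. Connectivity of the periodic graph
  provides a closed walk of non-zero winding. For the least length m of such walks, every one of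
  them runs along edges only, so its weight is exp (i t Phi) with Phi its magnetic flux. Hence t
  is a zero of a fixed non-trivial exponential sum, and such a sum has only finitely many zeros
  in [0,1] since it extends to an entire function that does not vanish at 0.
*)

theory Submission
  imports Defs "Jordan_Normal_Form.Schur_Decomposition" "HOL-Complex_Analysis.Complex_Analysis"
begin

no_notation fps_nth (infixl "$" 75)
no_notation vec_nth (infixl "$" 90)

section \<open>Zeros of exponential sums\<close>

lemma finite_zeros_cis_sum:
  fixes a :: "'a \<Rightarrow> real"
  assumes fin: "finite A" and ne: "A \<noteq> {}"
  shows "finite {t \<in> {0..1::real}. (\<Sum>p\<in>A. cis (t * a p)) = 0}"
proof (rule ccontr)
  define Z where "Z = {t \<in> {0..1::real}. (\<Sum>p\<in>A. cis (t * a p)) = 0}"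
  assume "infinite Z"
  define F where "F = (\<lambda>z::complex. \<Sum>p\<in>A. exp (\<i> * z * of_real (a p)))"
  have hol: "F holomorphic_on UNIV"
    unfolding F_def by (intro holomorphic_intros)
  have F_real: "F (of_real t) = (\<Sum>p\<in>A. cis (t * a p))" for t
    unfolding F_def by (intro sum.cong refl) (simp add: cis_conv_exp mult.assoc)
  have "infinite (complex_of_real ` Z)"
    using \<open>infinite Z\<close> by (subst finite_image_iff) (auto simp: inj_on_def)
  moreover have "complex_of_real ` Z \<subseteq> complex_of_real ` {0..1}"
    unfolding Z_def by auto
  moreover have "compact (complex_of_real ` {0..1})"
    by (intro compact_continuous_image continuous_intros) auto
  ultimately obtain \<xi> where "\<xi> islimpt (complex_of_real ` Z)"
    by (meson compact_eq_Bolzano_Weierstrass)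
  then have "F 0 = 0"
    by (rule analytic_continuation[OF hol open_UNIV connected_UNIV subset_UNIV UNIV_I])
       (auto simp: Z_def F_real)
  moreover have "F 0 = of_nat (card A)"
    unfolding F_def by simp
  ultimately show False
    using fin ne by simp
qed

section \<open>Traces of matrix powers\<close>

definition mat_trace :: "'a::semiring_0 mat \<Rightarrow> 'a" where
  "mat_trace A = (\<Sum>i<dim_row A. A $$ (i,i))"

lemma mat_trace_mult_comm:
  fixes A B :: "'a::comm_semiring_0 mat"
  assumes A: "A \<in> carrier_mat n k" and B: "B \<in> carrier_mat k n"
  shows "mat_trace (A * B) = mat_trace (B * A)"
proof -
  have "mat_trace (A * B) = (\<Sum>i<n. \<Sum>j<k. A $$ (i,j) * B $$ (j,i))"
    using A B by (auto simp: mat_trace_def scalar_prod_def atLeast0LessThan intro!: sum.cong)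
  also have "\<dots> = (\<Sum>j<k. \<Sum>i<n. B $$ (j,i) * A $$ (i,j))"
    by (subst sum.swap) (simp add: mult.commute)
  also have "\<dots> = mat_trace (B * A)"
    using A B by (auto simp: mat_trace_def scalar_prod_def atLeast0LessThan intro!: sum.cong)
  finally show ?thesis .
qed

lemma upper_triangular_mult:
  fixes X Y :: "'a::semiring_0 mat"
  assumes X: "X \<in> carrier_mat n n" and Y: "Y \<in> carrier_mat n n"
    and uX: "upper_triangular X" and uY: "upper_triangular Y"
  shows "upper_triangular (X * Y)"
    and "\<And>i. i < n \<Longrightarrow> (X * Y) $$ (i,i) = X $$ (i,i) * Y $$ (i,i)"
proof -
  have entry: "(X * Y) $$ (i,j) = (\<Sum>l\<in>{0..<n}. X $$ (i,l) * Y $$ (l,j))" if "i < n" "j < n" for i j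
    using X Y that by (simp add: scalar_prod_def)
  have vanish: "X $$ (i,l) * Y $$ (l,j) = 0" if "i < n" "l < n" "j \<le> i" "l \<noteq> i \<or> j \<noteq> i" for i j l
  proof (cases "l < i")
    case True
    then show ?thesis using uX X that by (auto dest: upper_triangularD)
  next
    case False
    with that have "j < l" by auto
    then show ?thesis using uY Y that by (auto dest: upper_triangularD)
  qed
  show "upper_triangular (X * Y)"
  proof (rule upper_triangularI)
    fix i j assume "j < i" and "i < dim_row (X * Y)"
    then have "i < n" "j < n" "j \<le> i" "j \<noteq> i"
      using X by auto
    then show "(X * Y) $$ (i,j) = 0"
      unfolding entry[OF \<open>i < n\<close> \<open>j < n\<close>] by (intro sum.neutral ballI vanish) auto
  qed
  fix i assume i: "i < n"
  have "(X * Y) $$ (i,i) = X $$ (i,i) * Y $$ (i,i) + (\<Sum>l\<in>{0..<n} - {i}. X $$ (i,l) * Y $$ (l,i))"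
    using i unfolding entry[OF i i] by (subst sum.remove[of _ i]) auto
  also have "(\<Sum>l\<in>{0..<n} - {i}. X $$ (i,l) * Y $$ (l,i)) = 0"
    by (intro sum.neutral ballI vanish) (use i in auto)
  finally show "(X * Y) $$ (i,i) = X $$ (i,i) * Y $$ (i,i)"
    by simp
qed

lemma upper_triangular_pow:
  fixes B :: "'a::semiring_1 mat"
  assumes B: "B \<in> carrier_mat n n" and uB: "upper_triangular B"
  shows "upper_triangular (B ^\<^sub>m m) \<and> (\<forall>i<n. (B ^\<^sub>m m) $$ (i,i) = B $$ (i,i) ^ m)"
proof (induction m)
  case 0
  then show ?case using B by auto
next
  case (Suc m)
  then show ?case
    using upper_triangular_mult[OF pow_carrier_mat[OF B] B] uB by (auto simp: power_commutes)
qed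

lemma proots_prod_linear_factors:
  "proots (\<Prod>a\<leftarrow>as. [:-a, 1:]) = mset (as :: 'a::idom list)"
proof (induction as)
  case (Cons a as)
  have "(\<Prod>a\<leftarrow>as. [:-a, 1:]) \<noteq> 0"
    by (auto simp: prod_list_zero_iff)
  then show ?case
    using Cons proots_linear_factor[of "-a"] by (simp add: proots_mult del: mult_pCons_left)
qed simp

lemma mat_trace_pow_eq_sum_proots:
  fixes A :: "complex mat"
  assumes A: "A \<in> carrier_mat n n"
  shows "mat_trace (A ^\<^sub>m m) = (\<Sum>a\<in>#proots (char_poly A). a ^ m)"
proof -
  obtain as where cp: "char_poly A = (\<Prod>a\<leftarrow>as. [:-a, 1:])"
    using char_poly_factorized[OF A] by blast
  obtain B P Q where sd: "schur_decomposition A as = (B,P,Q)"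
    by (cases "schur_decomposition A as") auto
  from schur_decomposition[OF A cp sd]
  have sim: "similar_mat_wit A B P Q" and uB: "upper_triangular B" and dB: "diag_mat B = as"
    by auto
  from similar_mat_witD2[OF A sim]
  have B: "B \<in> carrier_mat n n" and P: "P \<in> carrier_mat n n" and Q: "Q \<in> carrier_mat n n"
    and QP: "Q * P = 1\<^sub>m n"
    by auto
  have Bm: "B ^\<^sub>m m \<in> carrier_mat n n"
    using B by simp
  have "mat_trace (A ^\<^sub>m m) = mat_trace (P * (B ^\<^sub>m m * Q))"
    using similar_mat_wit_pow_id[OF sim] by (simp add: assoc_mult_mat[OF P Bm Q])
  also have "\<dots> = mat_trace (B ^\<^sub>m m * Q * P)"
    using Bm Q by (intro mat_trace_mult_comm[OF P]) auto
  also have "B ^\<^sub>m m * Q * P = B ^\<^sub>m m"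
    using QP by (simp add: assoc_mult_mat[OF Bm Q P] right_mult_one_mat[OF Bm])
  also have "mat_trace (B ^\<^sub>m m) = (\<Sum>i<n. B $$ (i,i) ^ m)"
    using upper_triangular_pow[OF B uB, of m] B unfolding mat_trace_def by auto
  also have "\<dots> = (\<Sum>a\<leftarrow>as. a ^ m)"
    using dB B by (auto simp: diag_mat_def comp_def interv_sum_list_conv_sum_set_nat atLeast0LessThan)
  also have "\<dots> = (\<Sum>a\<in>#proots (char_poly A). a ^ m)"
    by (simp add: cp proots_prod_linear_factors sum_mset_sum_list flip: mset_map)
  finally show ?thesis .
qed

section \<open>Eigenvalues of Hermitian matrices\<close>

definition hermitian_mat :: "nat \<Rightarrow> complex mat \<Rightarrow> bool" where
  "hermitian_mat n A \<longleftrightarrow> A \<in> carrier_mat n n \<and> (\<forall>i<n. \<forall>j<n. A $$ (j,i) = cnj (A $$ (i,j)))"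

lemma hermitian_mat_carrier: "hermitian_mat n A \<Longrightarrow> A \<in> carrier_mat n n"
  by (simp add: hermitian_mat_def)

lemma hermitian_mat_cnj:
  "hermitian_mat n A \<Longrightarrow> i < n \<Longrightarrow> j < n \<Longrightarrow> cnj (A $$ (i,j)) = A $$ (j,i)"
  unfolding hermitian_mat_def by (metis complex_cnj_cnj)

lemma char_poly_root_eigenvector:
  fixes A :: "complex mat"
  assumes A: "A \<in> carrier_mat n n" and r: "poly (char_poly A) r = 0"
  obtains v i0 where "i0 < n" "v $ i0 \<noteq> 0"
    and "\<And>i. i < n \<Longrightarrow> (\<Sum>j<n. A $$ (i,j) * v $ j) = r * v $ i"
proof -
  obtain v where v: "v \<in> carrier_vec n" "v \<noteq> 0\<^sub>v n" and Av: "A *\<^sub>v v = r \<cdot>\<^sub>v v"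
    using r eigenvalue_root_char_poly[OF A] A unfolding eigenvalue_def eigenvector_def by auto
  obtain i0 where "i0 < n" "v $ i0 \<noteq> 0"
    using v by (metis eq_vecI index_zero_vec carrier_vecD)
  moreover have "(\<Sum>j<n. A $$ (i,j) * v $ j) = r * v $ i" if "i < n" for i
  proof -
    have "(A *\<^sub>v v) $ i = (\<Sum>j<n. A $$ (i,j) * v $ j)"
      using A v that by (auto simp: scalar_prod_def atLeast0LessThan intro!: sum.cong)
    then show ?thesis
      using Av that v by simp
  qed
  ultimately show ?thesis
    using that by blast
qed

lemma hermitian_char_poly_root_real:
  assumes A: "hermitian_mat n A" and r: "poly (char_poly A) r = 0"
  shows "Im r = 0"
proof -
  note car = hermitian_mat_carrier[OF A] and herm = hermitian_mat_cnj[OF A]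
  obtain v i0 where i0: "i0 < n" "v $ i0 \<noteq> 0"
    and ev: "\<And>i. i < n \<Longrightarrow> (\<Sum>j<n. A $$ (i,j) * v $ j) = r * v $ i"
    using char_poly_root_eigenvector[OF car r] by metis
  define S where "S = (\<Sum>i<n. cnj (v $ i) * (\<Sum>j<n. A $$ (i,j) * v $ j))"
  define N where "N = (\<Sum>i<n. cnj (v $ i) * v $ i)"
  have "S = r * N"
    unfolding S_def N_def using ev by (auto simp: sum_distrib_left intro!: sum.cong)
  have "cnj S = (\<Sum>i<n. \<Sum>j<n. v $ i * cnj (A $$ (i,j)) * cnj (v $ j))"
    unfolding S_def by (simp add: sum_distrib_left mult.assoc)
  also have "\<dots> = (\<Sum>i<n. \<Sum>j<n. cnj (v $ j) * (A $$ (j,i) * v $ i))"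
    by (intro sum.cong refl) (simp add: herm mult_ac)
  also have "\<dots> = S"
    unfolding S_def by (subst sum.swap) (simp add: sum_distrib_left)
  finally have "Im S = 0"
    by (metis cnj.simps(2) neg_equal_zero)
  have "N = of_real (\<Sum>i<n. (cmod (v $ i))\<^sup>2)"
    unfolding N_def of_real_sum
    by (intro sum.cong refl) (metis complex_norm_square mult.commute of_real_power)
  moreover have "(\<Sum>i<n. (cmod (v $ i))\<^sup>2) > 0"
    using i0 by (intro sum_pos2[of _ i0]) auto
  ultimately show "Im r = 0"
    using \<open>S = r * N\<close> \<open>Im S = 0\<close> by simp
qed

lemma char_poly_root_norm_le_row_sum:
  fixes A :: "complex mat"
  assumes A: "A \<in> carrier_mat n n" and r: "poly (char_poly A) r = 0"
    and R: "\<And>i. i < n \<Longrightarrow> (\<Sum>j<n. cmod (A $$ (i,j))) \<le> R"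
  shows "cmod r \<le> R"
proof -
  obtain v i0 where i0: "i0 < n" "v $ i0 \<noteq> 0"
    and ev: "\<And>i. i < n \<Longrightarrow> (\<Sum>j<n. A $$ (i,j) * v $ j) = r * v $ i"
    using char_poly_root_eigenvector[OF A r] by metis
  define M where "M = Max ((\<lambda>j. cmod (v $ j)) ` {..<n})"
  have M_ge: "cmod (v $ j) \<le> M" if "j < n" for j
    unfolding M_def using that by (intro Max_ge) auto
  obtain i where i: "i < n" "M = cmod (v $ i)"
    unfolding M_def using i0 Max_in[of "(\<lambda>j. cmod (v $ j)) ` {..<n}"] by fastforce
  have "M > 0"
    using M_ge[OF i0(1)] i0(2) by (meson less_le_trans zero_less_norm_iff)
  have "cmod r * M = cmod (\<Sum>j<n. A $$ (i,j) * v $ j)"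
    using ev[OF i(1)] i(2) by (simp add: norm_mult)
  also have "\<dots> \<le> (\<Sum>j<n. cmod (A $$ (i,j)) * M)"
    by (rule order.trans[OF norm_sum]) (auto simp: norm_mult intro!: sum_mono mult_left_mono M_ge)
  also have "\<dots> \<le> R * M"
    using R[OF i(1)] \<open>M > 0\<close> by (simp flip: sum_distrib_right)
  finally show ?thesis
    using \<open>M > 0\<close> by simp
qed

lemma proots_char_poly_hermitian:
  assumes A: "hermitian_mat n A"
  shows "proots (char_poly A) = mset (map (\<lambda>j. complex_of_real (fiber_eigenvalue A j)) [1..<Suc n])"
proof -
  let ?P = "proots (char_poly A)"
  note car = hermitian_mat_carrier[OF A]
  have "char_poly A \<noteq> 0"
    using degree_monic_char_poly[OF car] by auto
  then have real: "complex_of_real (Re a) = a" if "a \<in># ?P" for a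
    using hermitian_char_poly_root_real[OF A] that by (simp add: complex_eq_iff)
  define L where "L = sorted_list_of_multiset (image_mset Re ?P)"
  have "length L = n"
    using size_proots_complex[of "char_poly A"] degree_monic_char_poly[OF car]
    unfolding L_def by (metis size_image_mset size_mset mset_sorted_list_of_multiset)
  then have "map (\<lambda>j. complex_of_real (fiber_eigenvalue A j)) [1..<Suc n] = map complex_of_real L"
    unfolding fiber_eigenvalue_def L_def[symmetric] by (intro nth_equalityI) (auto simp del: upt_Suc)
  also have "mset \<dots> = image_mset (\<lambda>a. complex_of_real (Re a)) ?P"
    unfolding L_def by (simp add: multiset.map_comp comp_def)
  also have "\<dots> = ?P"
    using real by (simp add: multiset.map_ident_strong)
  finally show ?thesis ..
qed

lemma mat_trace_pow_hermitian:
  assumes A: "hermitian_mat n A"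
  shows "mat_trace (A ^\<^sub>m m) = (\<Sum>j=1..n. complex_of_real (fiber_eigenvalue A j) ^ m)"
  using hermitian_mat_carrier[OF A]
  by (simp add: mat_trace_pow_eq_sum_proots proots_char_poly_hermitian[OF A] sum_mset_sum_list
      interv_sum_list_conv_sum_set_nat atLeastLessThanSuc_atLeastAtMost del: upt_Suc flip: mset_map)

lemma abs_fiber_eigenvalue_le:
  assumes A: "hermitian_mat n A" and j: "1 \<le> j" "j \<le> n"
    and R: "\<And>i. i < n \<Longrightarrow> (\<Sum>k<n. cmod (A $$ (i,k))) \<le> R"
  shows "\<bar>fiber_eigenvalue A j\<bar> \<le> R"
proof -
  note car = hermitian_mat_carrier[OF A]
  have "char_poly A \<noteq> 0"
    using degree_monic_char_poly[OF car] by auto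
  moreover have "complex_of_real (fiber_eigenvalue A j) \<in># proots (char_poly A)"
    unfolding proots_char_poly_hermitian[OF A] using j by (auto simp del: upt_Suc)
  ultimately have "poly (char_poly A) (complex_of_real (fiber_eigenvalue A j)) = 0"
    by simp
  from char_poly_root_norm_le_row_sum[OF car this R] show ?thesis
    by simp
qed

lemma eq_if_not_cInf_less_cSup:
  fixes S :: "'a::conditionally_complete_linorder set"
  assumes "bdd_below S" "bdd_above S" "\<not> Inf S < Sup S" "x \<in> S" "y \<in> S"
  shows "x = y"
  using cInf_lower[OF assms(4,1)] cSup_upper[OF assms(4,2)]
    cInf_lower[OF assms(5,1)] cSup_upper[OF assms(5,2)] assms(3)
  by (metis antisym not_less order_trans)

section \<open>Flat bands\<close>

lemma fiber_op_carrier: "fiber_op d \<nu> E src tgt \<tau> a V k \<in> carrier_mat \<nu> \<nu>"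
  unfolding fiber_op_def by simp

lemma fiber_op_entry:
  assumes "x < \<nu>" and "y < \<nu>"
  shows "fiber_op d \<nu> E src tgt \<tau> a V k $$ (x,y) =
    (\<Sum>e\<in>{e\<in>E. src e = x \<and> tgt e = y}. cis (a e + (\<Sum>i<d. real_of_int (\<tau> e i) * k i)))
      + (if x = y then complex_of_real (V x - real (degree_at E src x)) else 0)"
  using assms unfolding fiber_op_def by simp

lemma fiber_op_hermitian:
  assumes pg: "periodic_graph d \<nu> E src tgt rev_e \<tau>" and mp: "magnetic_potential E rev_e a"
  shows "hermitian_mat \<nu> (fiber_op d \<nu> E src tgt \<tau> a V k)"
  unfolding hermitian_mat_def
proof (intro conjI fiber_op_carrier allI impI)
  fix i j assume i: "i < \<nu>" and j: "j < \<nu>"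
  have rev: "rev_e e \<in> E \<and> rev_e (rev_e e) = e \<and> src (rev_e e) = tgt e \<and> tgt (rev_e e) = src e
      \<and> (\<forall>l. \<tau> (rev_e e) l = - \<tau> e l)" if "e \<in> E" for e
    using pg that unfolding periodic_graph_def by blast
  define \<phi> where "\<phi> e = a e + (\<Sum>l<d. real_of_int (\<tau> e l) * k l)" for e
  have \<phi>_rev: "\<phi> (rev_e e) = - \<phi> e" if "e \<in> E" for e
    using rev[OF that] mp that unfolding \<phi>_def magnetic_potential_def by (simp add: sum_negf)
  have "bij_betw rev_e {e\<in>E. src e = i \<and> tgt e = j} {e\<in>E. src e = j \<and> tgt e = i}"
    by (rule bij_betw_byWitness[where f' = rev_e]) (use rev in \<open>auto intro!: image_eqI\<close>)
  then have "(\<Sum>e\<in>{e\<in>E. src e = j \<and> tgt e = i}. cis (\<phi> e))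
      = (\<Sum>e\<in>{e\<in>E. src e = i \<and> tgt e = j}. cis (\<phi> (rev_e e)))"
    by (simp add: sum.reindex_bij_betw[symmetric])
  also have "\<dots> = cnj (\<Sum>e\<in>{e\<in>E. src e = i \<and> tgt e = j}. cis (\<phi> e))"
    by (simp add: \<phi>_rev cis_cnj)
  finally show "fiber_op d \<nu> E src tgt \<tau> a V k $$ (j,i) = cnj (fiber_op d \<nu> E src tgt \<tau> a V k $$ (i,j))"
    unfolding fiber_op_entry[OF i j] fiber_op_entry[OF j i] \<phi>_def[symmetric]
    by (auto simp del: of_real_diff)
qed

lemma fiber_op_row_sum_le:
  assumes fin: "finite E" and i: "i < \<nu>"
  shows "(\<Sum>j<\<nu>. cmod (fiber_op d \<nu> E src tgt \<tau> a V k $$ (i,j)))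
    \<le> real \<nu> * (2 * real (card E) + (\<Sum>x<\<nu>. \<bar>V x\<bar>))"
proof -
  have "cmod (fiber_op d \<nu> E src tgt \<tau> a V k $$ (i,j)) \<le> 2 * real (card E) + (\<Sum>x<\<nu>. \<bar>V x\<bar>)"
    if j: "j < \<nu>" for j
  proof -
    let ?F = "{e\<in>E. src e = i \<and> tgt e = j}"
    have "cmod (\<Sum>e\<in>?F. cis (a e + (\<Sum>l<d. real_of_int (\<tau> e l) * k l))) \<le> real (card ?F)"
      by (rule order.trans[OF norm_sum]) simp
    also have "\<dots> \<le> real (card E)"
      using fin by (intro of_nat_mono card_mono) auto
    finally have edges: "cmod (\<Sum>e\<in>?F. cis (a e + (\<Sum>l<d. real_of_int (\<tau> e l) * k l))) \<le> real (card E)" .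
    have "real (degree_at E src i) \<le> real (card E)"
      unfolding degree_at_def using fin by (intro of_nat_mono card_mono) auto
    moreover have "\<bar>V i\<bar> \<le> (\<Sum>x<\<nu>. \<bar>V x\<bar>)"
      using i by (intro member_le_sum) auto
    ultimately have "\<bar>V i - real (degree_at E src i)\<bar> \<le> real (card E) + (\<Sum>x<\<nu>. \<bar>V x\<bar>)"
      by linarith
    then have diag: "cmod (if i = j then complex_of_real (V i - real (degree_at E src i)) else 0)
        \<le> real (card E) + (\<Sum>x<\<nu>. \<bar>V x\<bar>)"
      by (cases "i = j") (simp_all del: of_real_diff)
    show ?thesis
      unfolding fiber_op_entry[OF i j]
      by (rule order.trans[OF norm_triangle_ineq]) (use edges diag in simp)
  qed
  then have "(\<Sum>j<\<nu>. cmod (fiber_op d \<nu> E src tgt \<tau> a V k $$ (i,j)))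
      \<le> (\<Sum>j<\<nu>. 2 * real (card E) + (\<Sum>x<\<nu>. \<bar>V x\<bar>))"
    by (intro sum_mono) simp
  then show ?thesis
    by simp
qed

lemma ac_spectrum_empty_imp_fiber_eigenvalue_eq:
  assumes pg: "periodic_graph d \<nu> E src tgt rev_e \<tau>" and mp: "magnetic_potential E rev_e a"
    and ac: "ac_spectrum d \<nu> E src tgt \<tau> a V = {}" and j: "1 \<le> j" "j \<le> \<nu>"
  shows "fiber_eigenvalue (fiber_op d \<nu> E src tgt \<tau> a V k) j
    = fiber_eigenvalue (fiber_op d \<nu> E src tgt \<tau> a V k') j"
proof (rule eq_if_not_cInf_less_cSup)
  let ?H = "fiber_op d \<nu> E src tgt \<tau> a V"
  let ?B = "band d \<nu> E src tgt \<tau> a V j"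
  let ?R = "real \<nu> * (2 * real (card E) + (\<Sum>x<\<nu>. \<bar>V x\<bar>))"
  have "finite E"
    using pg unfolding periodic_graph_def by blast
  then have "\<bar>fiber_eigenvalue (?H k) j\<bar> \<le> ?R" for k
    by (intro abs_fiber_eigenvalue_le[OF fiber_op_hermitian[OF pg mp] j] fiber_op_row_sum_le)
  then have "- ?R \<le> fiber_eigenvalue (?H k) j" "fiber_eigenvalue (?H k) j \<le> ?R" for k
    using abs_le_iff[of "fiber_eigenvalue (?H k) j" ?R] by (metis minus_le_iff)+
  then show "bdd_below ?B" "bdd_above ?B"
    unfolding band_def by (auto intro: bdd_belowI[of _ "- ?R"] bdd_aboveI[of _ ?R])
  show "\<not> Inf ?B < Sup ?B"
  proof
    assume "Inf ?B < Sup ?B"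
    with j have "?B \<in> {band d \<nu> E src tgt \<tau> a V j' | j'. 1 \<le> j' \<and> j' \<le> \<nu> \<and>
        Inf (band d \<nu> E src tgt \<tau> a V j') < Sup (band d \<nu> E src tgt \<tau> a V j')}"
      by blast
    then have "?B \<subseteq> ac_spectrum d \<nu> E src tgt \<tau> a V"
      unfolding ac_spectrum_def by (rule Union_upper)
    moreover have "?B \<noteq> {}"
      unfolding band_def by simp
    ultimately show False
      using ac by blast
  qed
  show "fiber_eigenvalue (?H k) j \<in> ?B" "fiber_eigenvalue (?H k') j \<in> ?B"
    unfolding band_def by (rule rangeI)+
qed

lemma ac_spectrum_empty_imp_mat_trace_pow_eq:
  assumes pg: "periodic_graph d \<nu> E src tgt rev_e \<tau>" and mp: "magnetic_potential E rev_e a"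
    and ac: "ac_spectrum d \<nu> E src tgt \<tau> a V = {}"
  shows "mat_trace (fiber_op d \<nu> E src tgt \<tau> a V k ^\<^sub>m m)
    = mat_trace (fiber_op d \<nu> E src tgt \<tau> a V k' ^\<^sub>m m)"
  unfolding mat_trace_pow_hermitian[OF fiber_op_hermitian[OF pg mp]]
  using ac_spectrum_empty_imp_fiber_eigenvalue_eq[OF pg mp ac, where k = k and k' = k']
  by (intro sum.cong refl) auto

section \<open>Walk expansion of matrix powers\<close>

fun is_walk :: "('q \<Rightarrow> 'v) \<Rightarrow> ('q \<Rightarrow> 'v) \<Rightarrow> 'v \<Rightarrow> 'q list \<Rightarrow> 'v \<Rightarrow> bool" where
  "is_walk sr tg x [] y \<longleftrightarrow> x = y"
| "is_walk sr tg x (q # qs) y \<longleftrightarrow> sr q = x \<and> is_walk sr tg (tg q) qs y"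

lemma is_walk_snoc: "is_walk sr tg x (qs @ [q]) y \<longleftrightarrow> is_walk sr tg x qs (sr q) \<and> tg q = y"
  by (induction qs arbitrary: x) auto

lemma is_walk_filter:
  assumes "\<And>q. \<not> P q \<Longrightarrow> sr q = tg q"
  shows "is_walk sr tg x qs y \<Longrightarrow> is_walk sr tg x (filter P qs) y"
  by (induction qs arbitrary: x) (auto simp: assms)

lemma lists_length_Suc_eq_snoc:
  "{qs. set qs \<subseteq> S \<and> length qs = Suc k}
    = (\<lambda>(qs, q). qs @ [q]) ` ({qs. set qs \<subseteq> S \<and> length qs = k} \<times> S)"
proof (intro equalityI subsetI)
  fix qs assume qs: "qs \<in> {qs. set qs \<subseteq> S \<and> length qs = Suc k}"
  then have "qs \<noteq> []"
    by auto
  with qs show "qs \<in> (\<lambda>(qs, q). qs @ [q]) ` ({qs. set qs \<subseteq> S \<and> length qs = k} \<times> S)"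
    by (intro image_eqI[of _ _ "(butlast qs, last qs)"]) (auto dest: in_set_butlastD)
qed auto

lemma mult_mat_entry_steps:
  fixes A M :: "'a::semiring_1 mat"
  assumes A: "A \<in> carrier_mat n n" and M: "M \<in> carrier_mat n n"
    and entry: "\<And>x y. x < n \<Longrightarrow> y < n \<Longrightarrow> M $$ (x,y) = (\<Sum>q\<in>S. if sr q = x \<and> tg q = y then w q else 0)"
    and range: "\<And>q. q \<in> S \<Longrightarrow> sr q < n"
    and x: "x < n" and y: "y < n"
  shows "(A * M) $$ (x,y) = (\<Sum>q\<in>S. if tg q = y then A $$ (x, sr q) * w q else 0)"
proof -
  have "(A * M) $$ (x,y) = (\<Sum>z<n. A $$ (x,z) * M $$ (z,y))"
    using A M x y by (auto simp: scalar_prod_def atLeast0LessThan intro!: sum.cong)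
  also have "\<dots> = (\<Sum>z<n. \<Sum>q\<in>S. if sr q = z \<and> tg q = y then A $$ (x,z) * w q else 0)"
    using y by (auto simp: entry sum_distrib_left intro!: sum.cong)
  also have "\<dots> = (\<Sum>q\<in>S. \<Sum>z<n. if z = sr q then (if tg q = y then A $$ (x, sr q) * w q else 0) else 0)"
    by (subst sum.swap) (auto intro!: sum.cong)
  also have "\<dots> = (\<Sum>q\<in>S. if tg q = y then A $$ (x, sr q) * w q else 0)"
    using range by (auto intro!: sum.cong)
  finally show ?thesis .
qed

lemma pow_mat_entry_walks:
  fixes M :: "'a::semiring_1 mat" and w :: "'q \<Rightarrow> 'a"
  assumes M: "M \<in> carrier_mat n n"
    and entry: "\<And>x y. x < n \<Longrightarrow> y < n \<Longrightarrow> M $$ (x,y) = (\<Sum>q\<in>S. if sr q = x \<and> tg q = y then w q else 0)"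
    and range: "\<And>q. q \<in> S \<Longrightarrow> sr q < n"
    and x: "x < n"
  shows "y < n \<Longrightarrow> (M ^\<^sub>m k) $$ (x,y)
    = (\<Sum>qs\<in>{qs. set qs \<subseteq> S \<and> length qs = k}. if is_walk sr tg x qs y then prod_list (map w qs) else 0)"
proof (induction k arbitrary: y)
  case 0
  have "{qs. set qs \<subseteq> S \<and> length qs = 0} = {[]}"
    by auto
  then show ?case
    using M x 0 by auto
next
  case (Suc k)
  let ?W = "{qs. set qs \<subseteq> S \<and> length qs = k}"
  let ?p = "\<lambda>qs. prod_list (map w qs)"
  have "(M ^\<^sub>m Suc k) $$ (x,y) = (\<Sum>q\<in>S. if tg q = y then (M ^\<^sub>m k) $$ (x, sr q) * w q else 0)"
    using mult_mat_entry_steps[OF pow_carrier_mat[OF M] M entry _ x Suc.prems] range by simp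
  also have "\<dots> = (\<Sum>q\<in>S. \<Sum>qs\<in>?W. if is_walk sr tg x qs (sr q) \<and> tg q = y then ?p qs * w q else 0)"
    using range Suc.IH by (auto simp: sum_distrib_right intro!: sum.cong)
  also have "\<dots> = (\<Sum>(qs, q)\<in>?W \<times> S. if is_walk sr tg x (qs @ [q]) y then ?p (qs @ [q]) else 0)"
    by (subst sum.swap) (simp add: sum.cartesian_product is_walk_snoc cong: if_cong)
  also have "\<dots> = (\<Sum>qs\<in>{qs. set qs \<subseteq> S \<and> length qs = Suc k}. if is_walk sr tg x qs y then ?p qs else 0)"
    unfolding lists_length_Suc_eq_snoc
    by (subst sum.reindex) (auto simp: inj_on_def case_prod_beta intro!: sum.cong)
  finally show ?case .
qed

section \<open>Closed walks in the quotient graph\<close>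

(* A step either follows an edge (Inl e) or rests at a vertex x (Inr x); resting steps carry the
   diagonal entry V x - \<kappa>_x of the fibre operator. *)
definition steps :: "'e set \<Rightarrow> nat \<Rightarrow> ('e + nat) set" where
  "steps E \<nu> = Inl ` E \<union> Inr ` {..<\<nu>}"

definition step_src :: "('e \<Rightarrow> nat) \<Rightarrow> 'e + nat \<Rightarrow> nat" where
  "step_src src q = (case q of Inl e \<Rightarrow> src e | Inr x \<Rightarrow> x)"

definition step_tgt :: "('e \<Rightarrow> nat) \<Rightarrow> 'e + nat \<Rightarrow> nat" where
  "step_tgt tgt q = (case q of Inl e \<Rightarrow> tgt e | Inr x \<Rightarrow> x)"

definition step_weight :: "'e set \<Rightarrow> ('e \<Rightarrow> nat) \<Rightarrow> ('e \<Rightarrow> real) \<Rightarrow> (nat \<Rightarrow> real) \<Rightarrow> 'e + nat \<Rightarrow> complex" where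
  "step_weight E src a V q = (case q of Inl e \<Rightarrow> cis (a e)
      | Inr x \<Rightarrow> complex_of_real (V x - real (degree_at E src x)))"

(* Windings are taken in the first lattice direction, along which the quasimomentum is varied. *)
definition step_winding :: "('e \<Rightarrow> nat \<Rightarrow> int) \<Rightarrow> 'e + nat \<Rightarrow> int" where
  "step_winding \<tau> q = (case q of Inl e \<Rightarrow> \<tau> e 0 | Inr x \<Rightarrow> 0)"

definition winding :: "('e \<Rightarrow> nat \<Rightarrow> int) \<Rightarrow> ('e + nat) list \<Rightarrow> int" where
  "winding \<tau> qs = (\<Sum>q\<leftarrow>qs. step_winding \<tau> q)"

definition flux :: "('e \<Rightarrow> real) \<Rightarrow> ('e + nat) list \<Rightarrow> real" where
  "flux a qs = (\<Sum>q\<leftarrow>qs. case q of Inl e \<Rightarrow> a e | Inr x \<Rightarrow> 0)"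

definition closed_walks :: "'e set \<Rightarrow> nat \<Rightarrow> ('e \<Rightarrow> nat) \<Rightarrow> ('e \<Rightarrow> nat) \<Rightarrow> nat \<Rightarrow> (nat \<times> ('e + nat) list) set"
  where "closed_walks E \<nu> src tgt m = {(x, qs). x < \<nu> \<and> set qs \<subseteq> steps E \<nu> \<and> length qs = m
    \<and> is_walk (step_src src) (step_tgt tgt) x qs x}"

lemma step_simps [simp]:
  "step_src src (Inl e) = src e" "step_src src (Inr x) = x"
  "step_tgt tgt (Inl e) = tgt e" "step_tgt tgt (Inr x) = x"
  "step_weight E src a V (Inl e) = cis (a e)"
  "step_weight E src a V (Inr x) = complex_of_real (V x - real (degree_at E src x))"
  "step_winding \<tau> (Inl e) = \<tau> e 0" "step_winding \<tau> (Inr x) = 0"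
  by (simp_all add: step_src_def step_tgt_def step_weight_def step_winding_def)

lemma finite_closed_walks:
  assumes "finite E"
  shows "finite (closed_walks E \<nu> src tgt m)"
proof (rule finite_subset)
  show "closed_walks E \<nu> src tgt m \<subseteq> {..<\<nu>} \<times> {qs. set qs \<subseteq> steps E \<nu> \<and> length qs = m}"
    unfolding closed_walks_def by auto
  show "finite ({..<\<nu>} \<times> {qs. set qs \<subseteq> steps E \<nu> \<and> length qs = m})"
    using assms by (intro finite_cartesian_product finite_lists_length_eq) (auto simp: steps_def)
qed

lemma winding_filter_isl: "winding \<tau> (filter isl qs) = winding \<tau> qs"
  by (induction qs) (auto simp: winding_def step_winding_def split: sum.splits)

lemma prod_list_step_weight_cis:
  "(\<Prod>q\<leftarrow>qs. step_weight E src a V q * cis (s * of_int (step_winding \<tau> q)))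
    = (\<Prod>q\<leftarrow>qs. step_weight E src a V q) * cis (s * of_int (winding \<tau> qs))"
  by (induction qs) (auto simp: winding_def cis_mult distrib_left mult_ac)

lemma prod_list_step_weight_edges:
  "set qs \<subseteq> Inl ` E \<Longrightarrow> (\<Prod>q\<leftarrow>qs. step_weight E src a V q) = cis (flux a qs)"
  by (induction qs) (auto simp: flux_def cis_mult)

lemma flux_scale: "flux (\<lambda>e. t * a e) qs = t * flux a qs"
  by (induction qs) (auto simp: flux_def distrib_left split: sum.splits)

lemma fiber_op_axis_entry:
  assumes fin: "finite E" and d: "d \<ge> 1" and x: "x < \<nu>" and y: "y < \<nu>"
  shows "fiber_op d \<nu> E src tgt \<tau> a V (\<lambda>i. if i = 0 then s else 0) $$ (x,y) =
    (\<Sum>q\<in>steps E \<nu>. if step_src src q = x \<and> step_tgt tgt q = y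
      then step_weight E src a V q * cis (s * of_int (step_winding \<tau> q)) else 0)"
proof -
  let ?g = "\<lambda>q. if step_src src q = x \<and> step_tgt tgt q = y
      then step_weight E src a V q * cis (s * of_int (step_winding \<tau> q)) else 0"
  have axis: "(\<Sum>i<d. real_of_int (\<tau> e i) * (if i = 0 then s else 0)) = s * of_int (\<tau> e 0)" for e
    using d by (simp add: if_distrib sum.delta' cong: if_cong)
  have "(\<Sum>q\<in>steps E \<nu>. ?g q) = (\<Sum>q\<in>Inl ` E. ?g q) + (\<Sum>q\<in>Inr ` {..<\<nu>}. ?g q)"
    unfolding steps_def using fin by (intro sum.union_disjoint) auto
  also have "\<dots> = (\<Sum>e\<in>E. ?g (Inl e)) + (\<Sum>z<\<nu>. ?g (Inr z))"
    by (simp add: sum.reindex del: step_simps)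
  also have "(\<Sum>e\<in>E. ?g (Inl e))
      = (\<Sum>e\<in>{e\<in>E. src e = x \<and> tgt e = y}. cis (a e + s * of_int (\<tau> e 0)))"
    using fin by (simp add: sum.inter_filter cis_mult cong: if_cong)
  also have "(\<Sum>z<\<nu>. ?g (Inr z))
      = (\<Sum>z<\<nu>. if z = x then (if x = y then complex_of_real (V x - real (degree_at E src x)) else 0) else 0)"
    by (intro sum.cong refl) auto
  also have "\<dots> = (if x = y then complex_of_real (V x - real (degree_at E src x)) else 0)"
    using x by simp
  finally show ?thesis
    unfolding fiber_op_entry[OF x y] axis by simp
qed

lemma mat_trace_pow_fiber_op_axis:
  assumes pg: "periodic_graph d \<nu> E src tgt rev_e \<tau>" and d: "d \<ge> 1"
  shows "mat_trace (fiber_op d \<nu> E src tgt \<tau> a V (\<lambda>i. if i = 0 then s else 0) ^\<^sub>m m)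
    = (\<Sum>(x, qs)\<in>closed_walks E \<nu> src tgt m.
        (\<Prod>q\<leftarrow>qs. step_weight E src a V q) * cis (s * of_int (winding \<tau> qs)))"
proof -
  let ?H = "fiber_op d \<nu> E src tgt \<tau> a V (\<lambda>i. if i = 0 then s else 0)"
  let ?W = "{qs. set qs \<subseteq> steps E \<nu> \<and> length qs = m}"
  let ?walk = "is_walk (step_src src) (step_tgt tgt)"
  let ?c = "\<lambda>qs. (\<Prod>q\<leftarrow>qs. step_weight E src a V q) * cis (s * of_int (winding \<tau> qs))"
  have fin: "finite E" and range: "\<And>e. e \<in> E \<Longrightarrow> src e < \<nu> \<and> tgt e < \<nu>"
    using pg unfolding periodic_graph_def by auto
  have "(?H ^\<^sub>m m) $$ (x,x) = (\<Sum>qs\<in>?W. if ?walk x qs x then ?c qs else 0)" if "x < \<nu>" for x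
    by (subst pow_mat_entry_walks[OF fiber_op_carrier fiber_op_axis_entry[OF fin d] _ that that])
       (use range in \<open>auto simp: steps_def prod_list_step_weight_cis cong: if_cong\<close>)
  then have "mat_trace (?H ^\<^sub>m m) = (\<Sum>x<\<nu>. \<Sum>qs\<in>?W. if ?walk x qs x then ?c qs else 0)"
    unfolding mat_trace_def by (simp add: carrier_matD(1)[OF fiber_op_carrier])
  also have "\<dots> = (\<Sum>(x, qs)\<in>{..<\<nu>} \<times> ?W. if ?walk x qs x then ?c qs else 0)"
    by (simp add: sum.cartesian_product)
  also have "\<dots> = (\<Sum>(x, qs)\<in>closed_walks E \<nu> src tgt m. ?c qs)"
  proof -
    have "closed_walks E \<nu> src tgt m = {p \<in> {..<\<nu>} \<times> ?W. ?walk (fst p) (snd p) (fst p)}"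
      unfolding closed_walks_def by auto
    moreover have "finite ({..<\<nu>} \<times> ?W)"
      using fin by (intro finite_cartesian_product finite_lists_length_eq) (auto simp: steps_def)
    ultimately show ?thesis
      by (simp add: sum.inter_filter case_prod_beta)
  qed
  finally show ?thesis .
qed

section \<open>Constant trigonometric sums\<close>

lemma sum_roots_of_unity_power_eq_0:
  fixes N :: nat and n :: int
  assumes N: "N > 0" and n: "\<not> int N dvd n"
  shows "(\<Sum>j<N. cis (2 * pi * real j / real N * of_int n)) = 0"
proof -
  define z where "z = cis (2 * pi / real N * of_int n)"
  have z_pow: "cis (2 * pi * real j / real N * of_int n) = z ^ j" for j
    unfolding z_def Complex.DeMoivre by (simp add: field_simps)
  have "z ^ N = 1"
    unfolding z_def Complex.DeMoivre using N by (simp add: cis_multiple_2pi)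
  have "z \<noteq> 1"
  proof
    assume "z = 1"
    then have "cos (2 * pi / real N * of_int n) = 1"
      unfolding z_def by (metis cis.sel(1) one_complex.sel(1))
    then obtain k :: int where "2 * pi / real N * of_int n = of_int k * 2 * pi"
      using cos_one_2pi_int by blast
    then have "real_of_int n = of_int (k * int N)"
      using N by (simp add: field_simps)
    then have "n = k * int N"
      by (simp only: of_int_eq_iff)
    with n show False
      by simp
  qed
  have "(\<Sum>j<N. cis (2 * pi * real j / real N * of_int n)) = (\<Sum>j<N. z ^ j)"
    by (simp only: z_pow)
  also have "\<dots> = (z ^ N - 1) / (z - 1)"
    using \<open>z \<noteq> 1\<close> by (rule geometric_sum)
  finally show ?thesis
    using \<open>z ^ N = 1\<close> by simp
qed

lemma const_trig_sum_coeff_eq_0: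
  fixes c :: "'i \<Rightarrow> complex" and f :: "'i \<Rightarrow> int"
  assumes fin: "finite I" and b: "b \<noteq> 0"
    and const: "\<And>s. (\<Sum>i\<in>I. c i * cis (s * of_int (f i))) = (\<Sum>i\<in>I. c i)"
  shows "(\<Sum>i\<in>{i\<in>I. f i = b}. c i) = 0"
proof -
  \<comment> \<open>N exceeds all frequency differences, so the discrete Fourier transform of length N isolates b.\<close>
  define N where "N = nat (\<bar>b\<bar> + (\<Sum>i\<in>I. \<bar>f i - b\<bar>) + 1)"
  have sum_ge: "(\<Sum>i\<in>I. \<bar>f i - b\<bar>) \<ge> \<bar>f i - b\<bar>" if "i \<in> I" for i
    using fin that by (intro member_le_sum) auto
  have sum_abs_nonneg: "(\<Sum>i\<in>I. \<bar>f i - b\<bar>) \<ge> 0"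
    by (intro sum_nonneg) simp
  then have N: "int N = \<bar>b\<bar> + (\<Sum>i\<in>I. \<bar>f i - b\<bar>) + 1"
    unfolding N_def by simp
  then have "N > 0"
    using sum_abs_nonneg abs_ge_zero[of b] by linarith
  have not_dvd: "\<not> int N dvd n" if "n \<noteq> 0" "\<bar>n\<bar> < int N" for n
    using that dvd_imp_le_int[of n "int N"] by auto
  define e where "e j n = cis (2 * pi * real j / real N * of_int n)" for j :: nat and n :: int
  have e_add: "e j n1 * e j n2 = e j (n1 + n2)" for j n1 n2
    unfolding e_def by (simp add: cis_mult distrib_left)
  have "(\<Sum>j<N. (\<Sum>i\<in>I. c i * e j (f i)) * e j (-b)) = (\<Sum>i\<in>I. c i) * (\<Sum>j<N. e j (-b))"
    unfolding e_def const by (simp add: sum_distrib_left)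
  also have "(\<Sum>j<N. e j (-b)) = 0"
    unfolding e_def using \<open>N > 0\<close>
    by (intro sum_roots_of_unity_power_eq_0 not_dvd) (use N b sum_abs_nonneg in auto)
  finally have "0 = (\<Sum>j<N. (\<Sum>i\<in>I. c i * e j (f i)) * e j (-b))"
    by simp
  also have "\<dots> = (\<Sum>i\<in>I. c i * (\<Sum>j<N. e j (f i - b)))"
    by (simp add: sum_distrib_right sum_distrib_left mult.assoc e_add sum.swap[of _ I])
  also have "\<dots> = (\<Sum>i\<in>I. if f i = b then c i * of_nat N else 0)"
  proof (intro sum.cong refl)
    fix i assume i: "i \<in> I"
    show "c i * (\<Sum>j<N. e j (f i - b)) = (if f i = b then c i * of_nat N else 0)"
    proof (cases "f i = b")
      case True
      then show ?thesis
        unfolding e_def by simp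
    next
      case False
      have "(\<Sum>j<N. e j (f i - b)) = 0"
        unfolding e_def using \<open>N > 0\<close>
        by (intro sum_roots_of_unity_power_eq_0 not_dvd) (use False N sum_ge[OF i] in auto)
      with False show ?thesis
        by simp
    qed
  qed
  also have "\<dots> = (\<Sum>i\<in>{i\<in>I. f i = b}. c i * of_nat N)"
    using fin by (simp add: sum.inter_filter)
  also have "\<dots> = (\<Sum>i\<in>{i\<in>I. f i = b}. c i) * of_nat N"
    by (simp add: sum_distrib_right)
  finally show ?thesis
    using \<open>N > 0\<close> by simp
qed

section \<open>Closed walks of non-zero winding\<close>

lemma lift_path_imp_edge_walk:
  assumes "(lift_adj d E src tgt \<tau>)\<^sup>*\<^sup>* u w"
  shows "\<exists>qs. set qs \<subseteq> Inl ` E \<and> is_walk (step_src src) (step_tgt tgt) (fst u) qs (fst w)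
    \<and> snd w 0 = snd u 0 + winding \<tau> qs"
  using assms
proof (induction rule: rtranclp_induct)
  case base
  show ?case
    by (intro exI[of _ "[]"]) (simp add: winding_def)
next
  case (step w w')
  then obtain qs where qs: "set qs \<subseteq> Inl ` E" "is_walk (step_src src) (step_tgt tgt) (fst u) qs (fst w)"
    "snd w 0 = snd u 0 + winding \<tau> qs"
    by blast
  from step(2) obtain e where "e \<in> E" "src e = fst w" "tgt e = fst w'" "snd w' 0 = snd w 0 + \<tau> e 0"
    unfolding lift_adj_def by blast
  with qs show ?case
    by (intro exI[of _ "qs @ [Inl e]"]) (auto simp: is_walk_snoc winding_def)
qed

lemma closed_walk_with_nonzero_winding:
  assumes d: "d \<ge> 1" and pg: "periodic_graph d \<nu> E src tgt rev_e \<tau>"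
    and conn: "lift_connected d \<nu> E src tgt \<tau>"
  shows "\<exists>m. \<exists>p\<in>closed_walks E \<nu> src tgt m. winding \<tau> (snd p) \<noteq> 0"
proof -
  have "\<nu> \<ge> 1"
    using pg unfolding periodic_graph_def by blast
  moreover have "lattice_pt d (\<lambda>_. 0)" and "lattice_pt d (\<lambda>i. if i = 0 then 1 else 0)"
    using d by (auto simp: lattice_pt_def)
  ultimately have "(lift_adj d E src tgt \<tau>)\<^sup>*\<^sup>* (0, \<lambda>_. 0) (0, \<lambda>i. if i = 0 then 1 else 0)"
    using conn unfolding lift_connected_def by auto
  then obtain qs where "set qs \<subseteq> Inl ` E" "is_walk (step_src src) (step_tgt tgt) 0 qs 0"
    and "winding \<tau> qs = 1"
    by (auto dest: lift_path_imp_edge_walk)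
  with \<open>\<nu> \<ge> 1\<close> have "(0, qs) \<in> closed_walks E \<nu> src tgt (length qs)"
    unfolding closed_walks_def steps_def by auto
  with \<open>winding \<tau> qs = 1\<close> show ?thesis
    by force
qed

lemma shortest_winding_walk_follows_edges:
  assumes p: "p \<in> closed_walks E \<nu> src tgt m" "winding \<tau> (snd p) \<noteq> 0"
    and shortest: "\<And>m' p'. m' < m \<Longrightarrow> p' \<in> closed_walks E \<nu> src tgt m' \<Longrightarrow> winding \<tau> (snd p') = 0"
  shows "set (snd p) \<subseteq> Inl ` E"
proof (rule ccontr)
  obtain x qs where p_eq: "p = (x, qs)"
    by fastforce
  assume "\<not> set (snd p) \<subseteq> Inl ` E"
  then obtain q where q: "q \<in> set qs" "q \<notin> Inl ` E"
    unfolding p_eq by auto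
  with p have "\<not> isl q"
    unfolding p_eq closed_walks_def steps_def by auto
  then have "length (filter isl qs) < m"
    using p q(1) length_filter_less[of q qs isl] unfolding p_eq closed_walks_def by auto
  \<comment> \<open>Dropping the resting steps leaves a shorter closed walk with the same winding.\<close>
  moreover have "(x, filter isl qs) \<in> closed_walks E \<nu> src tgt (length (filter isl qs))"
    using p unfolding p_eq closed_walks_def
    by (auto intro!: is_walk_filter simp: step_src_def step_tgt_def split: sum.splits)
  ultimately show False
    using shortest p(2) unfolding p_eq by (fastforce simp: winding_filter_isl)
qed

lemma ac_spectrum_empty_imp_flux_sum_eq_0:
  assumes d: "d \<ge> 1" and pg: "periodic_graph d \<nu> E src tgt rev_e \<tau>"
    and mp: "magnetic_potential E rev_e a" and ac: "ac_spectrum d \<nu> E src tgt \<tau> a V = {}"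
    and b: "b \<noteq> 0"
    and edges: "\<And>p. p \<in> closed_walks E \<nu> src tgt m \<Longrightarrow> winding \<tau> (snd p) = b \<Longrightarrow> set (snd p) \<subseteq> Inl ` E"
  shows "(\<Sum>p\<in>{p \<in> closed_walks E \<nu> src tgt m. winding \<tau> (snd p) = b}. cis (flux a (snd p))) = 0"
proof -
  let ?C = "closed_walks E \<nu> src tgt m"
  let ?c = "\<lambda>p. \<Prod>q\<leftarrow>snd p. step_weight E src a V q"
  let ?H = "\<lambda>s. fiber_op d \<nu> E src tgt \<tau> a V (\<lambda>i. if i = 0 then s else 0)"
  have fin: "finite E"
    using pg unfolding periodic_graph_def by blast
  have trace: "mat_trace (?H s ^\<^sub>m m) = (\<Sum>p\<in>?C. ?c p * cis (s * of_int (winding \<tau> (snd p))))" for s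
    unfolding mat_trace_pow_fiber_op_axis[OF pg d] by (simp add: case_prod_beta)
  have "(\<Sum>p\<in>{p \<in> ?C. winding \<tau> (snd p) = b}. ?c p) = 0"
  proof (rule const_trig_sum_coeff_eq_0[OF finite_closed_walks[OF fin] b])
    fix s
    have "(\<Sum>p\<in>?C. ?c p * cis (s * of_int (winding \<tau> (snd p)))) = mat_trace (?H s ^\<^sub>m m)"
      by (rule trace[symmetric])
    also have "\<dots> = mat_trace (?H 0 ^\<^sub>m m)"
      by (rule ac_spectrum_empty_imp_mat_trace_pow_eq[OF pg mp ac])
    also have "\<dots> = (\<Sum>p\<in>?C. ?c p)"
      unfolding trace by simp
    finally show "(\<Sum>p\<in>?C. ?c p * cis (s * of_int (winding \<tau> (snd p)))) = (\<Sum>p\<in>?C. ?c p)" .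
  qed
  moreover have "?c p = cis (flux a (snd p))" if "p \<in> {p \<in> ?C. winding \<tau> (snd p) = b}" for p
    using that edges by (simp add: prod_list_step_weight_edges)
  ultimately show ?thesis
    by simp
qed

theorem proposition2p15:
  fixes d \<nu> :: nat and E :: "'e set" and src tgt :: "'e \<Rightarrow> nat" and rev_e :: "'e \<Rightarrow> 'e"
    and \<tau> :: "'e \<Rightarrow> nat \<Rightarrow> int" and \<alpha> :: "'e \<Rightarrow> real" and V :: "nat \<Rightarrow> real"
  assumes "d \<ge> 1"
    and "periodic_graph d \<nu> E src tgt rev_e \<tau>"
    and "lift_connected d \<nu> E src tgt \<tau>"
    and "magnetic_potential E rev_e \<alpha>"
  shows "finite {t \<in> {0..1::real}. ac_spectrum d \<nu> E src tgt \<tau> (\<lambda>e. t * \<alpha> e) V = {}}"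
proof -
  define m where "m = (LEAST m. \<exists>p\<in>closed_walks E \<nu> src tgt m. winding \<tau> (snd p) \<noteq> 0)"
  obtain p0 where p0: "p0 \<in> closed_walks E \<nu> src tgt m" "winding \<tau> (snd p0) \<noteq> 0"
    using LeastI_ex[OF closed_walk_with_nonzero_winding[OF assms(1-3)]] unfolding m_def by blast
  have edges: "set (snd p) \<subseteq> Inl ` E"
    if "p \<in> closed_walks E \<nu> src tgt m" "winding \<tau> (snd p) \<noteq> 0" for p
    using shortest_winding_walk_follows_edges[OF that] not_less_Least unfolding m_def by blast
  define G where "G = {p \<in> closed_walks E \<nu> src tgt m. winding \<tau> (snd p) = winding \<tau> (snd p0)}"
  have "G \<subseteq> closed_walks E \<nu> src tgt m" and "p0 \<in> G"
    unfolding G_def using p0 by auto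
  moreover have "finite (closed_walks E \<nu> src tgt m)"
    using assms(2) finite_closed_walks unfolding periodic_graph_def by blast
  ultimately have "finite {t \<in> {0..1}. (\<Sum>p\<in>G. cis (t * flux \<alpha> (snd p))) = 0}"
    by (intro finite_zeros_cis_sum) (auto intro: finite_subset)
  moreover have "{t \<in> {0..1}. ac_spectrum d \<nu> E src tgt \<tau> (\<lambda>e. t * \<alpha> e) V = {}}
      \<subseteq> {t \<in> {0..1}. (\<Sum>p\<in>G. cis (t * flux \<alpha> (snd p))) = 0}"
  proof safe
    fix t :: real assume "t \<in> {0..1}" and ac: "ac_spectrum d \<nu> E src tgt \<tau> (\<lambda>e. t * \<alpha> e) V = {}"
    have "magnetic_potential E rev_e (\<lambda>e. t * \<alpha> e)"
      using assms(4) by (simp add: magnetic_potential_def)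
    from ac_spectrum_empty_imp_flux_sum_eq_0[OF assms(1,2) this ac p0(2)] edges p0(2)
    show "(\<Sum>p\<in>G. cis (t * flux \<alpha> (snd p))) = 0"
      unfolding G_def by (simp add: flux_scale)
  qed
  ultimately show ?thesis
    by (rule finite_subset[rotated])
qed

end
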